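(* Let $(X,m)$ be a $\sigma$-finite measure space, let $1\le p<\infty$, let $\gamma>0$, and let $\{T_t:t>0\}$ be a one-parameter family of (not necessarily linear) operators on $L^p(X,m)$. Let $f\in L^p(X,m)$ and assume that $(x,t)\mapsto T_tf(x)$ is measurable on $X\times(0,\infty)$. (i) If $T^*f:=\sup_{t>0}|T_tf|\in L^p(X,m)$, then $$\sup_{\lambda>0}\lambda^p\,(m\times w_\gamma)\Big(\Big\{(x,t)\in X\times(0,\infty):\frac{|T_tf(x)|}{t^{\gamma/p}}>\lambda\Big\}\Big)\le\frac1\gamma\,\|T^*f\|_{L^p(X,m)}^p .$$ In particular, if $p>1$ and there is $C_p>0$ with $\|T^*g\|_{L^p(X,m)}\le C_p\|g\|_{L^p(X,m)}$ for all $g\in L^p(X,m)$, then the left-hand side above is at most $\frac{C_p^p}{\gamma}\|f\|_{L^p(X,m)}^p$. (ii) If the limit $g(x):=\lim_{t\to0+}T_tf(x)$ exists and is finite for $m$-a.e. $x\in X$, then $$\frac1\gamma\,\|g\|_{L^p(X,m)}^p\le\liminf_{\lambda\to\infty}\lambda^p\,(m\times w_\gamma)\Big(\Big\{(x,t)\in X\times(0,\infty):\frac{|T_tf(x)|}{t^{\gamma/p}}>\lambda\Big\}\Big).$$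
   Context: For $\gamma>0$, $w_\gamma$ denotes the measure on $(0,\infty)$ given by $w_\gamma(A)=\int_A t^{\gamma-1}\,dt$ for Lebesgue measurable $A\subset(0,\infty)$; $m\times w_\gamma$ is the product measure on $X\times(0,\infty)$. *)

theory Defs
  imports "HOL-Analysis.Analysis"
begin

definition wgamma :: "real \<Rightarrow> real measure" where
  "wgamma \<gamma> = density (restrict_space lborel {0<..}) (\<lambda>t. ennreal (t powr (\<gamma> - 1)))"

definition enn_powr :: "ennreal \<Rightarrow> real \<Rightarrow> ennreal" where
  "enn_powr a p = (if a = top then top else ennreal (enn2real a powr p))"

definition Lp_mem :: "'a measure \<Rightarrow> real \<Rightarrow> ('a \<Rightarrow> real) \<Rightarrow> bool" where
  "Lp_mem M p h \<longleftrightarrow> h \<in> borel_measurable M \<and> (\<integral>\<^sup>+ x. ennreal (\<bar>h x\<bar> powr p) \<partial>M) < \<infinity>"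

definition Lp_norm_pow :: "'a measure \<Rightarrow> real \<Rightarrow> ('a \<Rightarrow> real) \<Rightarrow> ennreal" where
  "Lp_norm_pow M p h = (\<integral>\<^sup>+ x. ennreal (\<bar>h x\<bar> powr p) \<partial>M)"

definition Tstar :: "(real \<Rightarrow> ('a \<Rightarrow> real) \<Rightarrow> ('a \<Rightarrow> real)) \<Rightarrow> ('a \<Rightarrow> real) \<Rightarrow> 'a \<Rightarrow> ennreal" where
  "Tstar T f x = (SUP t\<in>{0<..}. ennreal \<bar>T t f x\<bar>)"

definition level_meas ::
  "'a measure \<Rightarrow> real \<Rightarrow> real \<Rightarrow> (real \<Rightarrow> ('a \<Rightarrow> real) \<Rightarrow> ('a \<Rightarrow> real)) \<Rightarrow> ('a \<Rightarrow> real) \<Rightarrow> real \<Rightarrow> ennreal" where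
  "level_meas M p \<gamma> T f lam =
     emeasure (M \<Otimes>\<^sub>M wgamma \<gamma>)
       {(x, t) \<in> space M \<times> {0<..}. \<bar>T t f x\<bar> / t powr (\<gamma> / p) > lam}"

end

theory Submission
  imports Defs
begin

text \<open>
  Fix \<open>x\<close> and write \<open>u(t) = T\<^sub>t f(x)\<close>. The \<open>t\<close>-slice of the level set at height \<open>\<lambda>\<close> is
  \<open>{t > 0. |u(t)| > \<lambda> t\<^bsup>\<gamma>/p\<^esup>}\<close>. If \<open>|u| \<le> c\<close> this slice lies in \<open>(0, (c/\<lambda>)\<^bsup>p/\<gamma>\<^esup>)\<close>, an interval
  whose \<open>w\<^sub>\<gamma>\<close>-measure times \<open>\<lambda>\<^sup>p\<close> is exactly \<open>c\<^sup>p/\<gamma>\<close>; taking \<open>c = T\<^sup>*f(x)\<close> gives a pointwise bound.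
  If \<open>u(t) \<rightarrow> l\<close> as \<open>t \<rightarrow> 0+\<close>, then for each \<open>b < |l|\<close> the slice contains \<open>(0, (b/\<lambda>)\<^bsup>p/\<gamma>\<^esup>)\<close> once
  \<open>\<lambda>\<close> is large, so the same normalised measure is eventually at least \<open>b\<^sup>p/\<gamma>\<close>. Integrating the slices
  over \<open>X\<close> (Tonelli) yields (i) directly and (ii) after Fatou's lemma along \<open>\<lambda> \<rightarrow> \<infinity>\<close>.
\<close>

lemma space_wgamma [simp]: "space (wgamma \<gamma>) = {0<..}"
  by (simp add: wgamma_def space_restrict_space)

lemma sets_wgamma: "sets (wgamma \<gamma>) = sets (restrict_space lborel {0::real<..})"
  by (simp add: wgamma_def)

lemma borel_measurable_wgamma_ident [measurable]: "(\<lambda>t::real. t) \<in> borel_measurable (wgamma \<gamma>)"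
  by (subst measurable_cong_sets[OF sets_wgamma refl]) (auto intro!: measurable_restrict_space1)

lemma Ioo_in_sets_wgamma [simp]: "{0<..<r} \<in> sets (wgamma \<gamma>)"
  by (auto simp: sets_wgamma sets_restrict_space_iff)

lemma emeasure_wgamma_Ioo:
  assumes "\<gamma> > 0" and "r \<ge> 0"
  shows "emeasure (wgamma \<gamma>) {0<..<r} = ennreal (r powr \<gamma> / \<gamma>)"
proof -
  have "emeasure (wgamma \<gamma>) {0<..<r}
      = (\<integral>\<^sup>+ t. ennreal (t powr (\<gamma> - 1)) * indicator {0<..<r} t \<partial>restrict_space lborel {0<..})"
    unfolding wgamma_def
    by (rule emeasure_density) (auto intro!: measurable_restrict_space1 simp: sets_restrict_space_iff)
  also have "\<dots> = (\<integral>\<^sup>+ t. ennreal (t powr (\<gamma> - 1)) * indicator {0<..<r} t \<partial>lborel)"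
    by (subst nn_integral_restrict_space) (auto intro!: nn_integral_cong simp: indicator_def)
  also have "\<dots> = ennreal (r powr (\<gamma> - 1 + 1) / (\<gamma> - 1 + 1))"
    using has_integral_powr_from_0[of "\<gamma> - 1" r] assms
    by (intro nn_integral_has_integral_lebesgue') (auto simp: has_integral_Icc_iff_Ioo)
  finally show ?thesis by simp
qed

lemma sigma_finite_measure_wgamma:
  assumes "\<gamma> > 0"
  shows "sigma_finite_measure (wgamma \<gamma>)"
proof
  show "\<exists>A. countable A \<and> A \<subseteq> sets (wgamma \<gamma>) \<and> \<Union> A = space (wgamma \<gamma>) \<and>
      (\<forall>a\<in>A. emeasure (wgamma \<gamma>) a \<noteq> \<infinity>)"
    using assms
    by (intro exI[of _ "range (\<lambda>n::nat. {0<..<real n})"])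
      (auto simp: emeasure_wgamma_Ioo reals_Archimedean2)
qed

lemma powr_less_iff_less_powr_inverse:
  fixes t x q :: real
  assumes "q > 0" and "t \<ge> 0" and "x \<ge> 0"
  shows "t powr q < x \<longleftrightarrow> t < x powr (1 / q)"
proof
  assume "t powr q < x"
  then have "(t powr q) powr (1 / q) < x powr (1 / q)"
    using assms by (intro powr_less_mono2) auto
  then show "t < x powr (1 / q)"
    using assms by (simp add: powr_powr)
next
  assume "t < x powr (1 / q)"
  then have "t powr q < (x powr (1 / q)) powr q"
    using assms by (intro powr_less_mono2) auto
  then show "t powr q < x"
    using assms by (simp add: powr_powr)
qed

definition level_slice :: "real \<Rightarrow> real \<Rightarrow> (real \<Rightarrow> real) \<Rightarrow> real \<Rightarrow> real set" where
  "level_slice p \<gamma> u lam = {t \<in> {0<..}. \<bar>u t\<bar> / t powr (\<gamma> / p) > lam}"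

lemma level_slice_subset_Ioo:
  assumes "p > 0" and "\<gamma> > 0" and "lam > 0" and bound: "\<And>t. t > 0 \<Longrightarrow> \<bar>u t\<bar> \<le> c"
  shows "level_slice p \<gamma> u lam \<subseteq> {0<..<(c / lam) powr (p / \<gamma>)}"
proof
  fix t assume "t \<in> level_slice p \<gamma> u lam"
  then have t: "t > 0" and "lam < \<bar>u t\<bar> / t powr (\<gamma> / p)"
    by (auto simp: level_slice_def)
  with bound[OF t] have "lam < c / t powr (\<gamma> / p)"
    by (smt (verit) divide_right_mono powr_ge_zero)
  then have "t powr (\<gamma> / p) < c / lam"
    using t \<open>lam > 0\<close> by (simp add: field_simps)
  moreover have "c / lam \<ge> 0"
    using calculation t by (smt (verit) powr_gt_zero)
  ultimately show "t \<in> {0<..<(c / lam) powr (p / \<gamma>)}"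
    using t assms by (simp add: powr_less_iff_less_powr_inverse)
qed

lemma Ioo_subset_level_slice:
  assumes "p > 0" and "\<gamma> > 0" and "lam > 0" and "b > 0"
    and bound: "\<And>t. t > 0 \<Longrightarrow> t < (b / lam) powr (p / \<gamma>) \<Longrightarrow> b < \<bar>u t\<bar>"
  shows "{0<..<(b / lam) powr (p / \<gamma>)} \<subseteq> level_slice p \<gamma> u lam"
proof
  fix t assume t: "t \<in> {0<..<(b / lam) powr (p / \<gamma>)}"
  then have "t powr (\<gamma> / p) < b / lam"
    using assms by (simp add: powr_less_iff_less_powr_inverse)
  then have "lam < b / t powr (\<gamma> / p)"
    using t assms by (simp add: field_simps)
  also have "\<dots> < \<bar>u t\<bar> / t powr (\<gamma> / p)"
    using t bound by (intro divide_strict_right_mono) auto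
  finally show "t \<in> level_slice p \<gamma> u lam"
    using t by (simp add: level_slice_def)
qed

lemma scaled_emeasure_wgamma_Ioo:
  assumes "p > 0" and "\<gamma> > 0" and "lam > 0" and "c \<ge> 0"
  shows "ennreal (lam powr p) * emeasure (wgamma \<gamma>) {0<..<(c / lam) powr (p / \<gamma>)} = ennreal (c powr p / \<gamma>)"
  using assms
  by (simp add: emeasure_wgamma_Ioo ennreal_mult[symmetric] powr_powr powr_divide)

lemma level_slice_in_sets:
  assumes "u \<in> borel_measurable (wgamma \<gamma>)"
  shows "level_slice p \<gamma> u lam \<in> sets (wgamma \<gamma>)"
proof -
  have "level_slice p \<gamma> u lam = {t \<in> space (wgamma \<gamma>). lam < \<bar>u t\<bar> / t powr (\<gamma> / p)}"
    by (auto simp: level_slice_def)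
  also have "\<dots> \<in> sets (wgamma \<gamma>)"
    using assms by measurable
  finally show ?thesis .
qed

lemma level_slice_weak_type:
  assumes "p > 0" and "\<gamma> > 0" and "lam > 0"
  shows "ennreal (lam powr p) * emeasure (wgamma \<gamma>) (level_slice p \<gamma> u lam)
    \<le> ennreal (1 / \<gamma>) * enn_powr (SUP t\<in>{0<..}. ennreal \<bar>u t\<bar>) p"
proof (cases "(SUP t\<in>{0<..}. ennreal \<bar>u t\<bar>) = top")
  case True
  then show ?thesis
    using assms by (simp add: enn_powr_def ennreal_mult_top)
next
  case False
  then obtain c where c: "(SUP t\<in>{0<..}. ennreal \<bar>u t\<bar>) = ennreal c" "c \<ge> 0"
    by (cases "SUP t\<in>{0<..}. ennreal \<bar>u t\<bar>" rule: ennreal_cases) auto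
  have "ennreal \<bar>u t\<bar> \<le> ennreal c" if "t > 0" for t
    using that c(1)[symmetric] by (auto intro!: SUP_upper)
  then have "\<bar>u t\<bar> \<le> c" if "t > 0" for t
    using that c(2) by (simp add: ennreal_le_iff)
  then have "emeasure (wgamma \<gamma>) (level_slice p \<gamma> u lam)
      \<le> emeasure (wgamma \<gamma>) {0<..<(c / lam) powr (p / \<gamma>)}"
    using assms by (intro emeasure_mono level_slice_subset_Ioo) auto
  then have "ennreal (lam powr p) * emeasure (wgamma \<gamma>) (level_slice p \<gamma> u lam)
      \<le> ennreal (lam powr p) * emeasure (wgamma \<gamma>) {0<..<(c / lam) powr (p / \<gamma>)}"
    by (rule mult_left_mono) simp
  also have "\<dots> = ennreal (1 / \<gamma>) * enn_powr (SUP t\<in>{0<..}. ennreal \<bar>u t\<bar>) p"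
    using assms c by (simp add: scaled_emeasure_wgamma_Ioo enn_powr_def ennreal_mult[symmetric])
  finally show ?thesis .
qed

lemma level_slice_eventually_ge:
  assumes "p > 0" and "\<gamma> > 0" and u: "u \<in> borel_measurable (wgamma \<gamma>)"
    and lim: "(u \<longlongrightarrow> l) (at_right 0)" and "0 < b" and "b < \<bar>l\<bar>"
  shows "\<forall>\<^sub>F lam in at_top.
    ennreal (b powr p / \<gamma>) \<le> ennreal (lam powr p) * emeasure (wgamma \<gamma>) (level_slice p \<gamma> u lam)"
proof -
  have "\<forall>\<^sub>F t in at_right 0. b < \<bar>u t\<bar>"
    using order_tendstoD(1)[OF tendsto_rabs[OF lim] \<open>b < \<bar>l\<bar>\<close>] .
  then obtain d where "d > 0" and d: "\<And>t. t > 0 \<Longrightarrow> t < d \<Longrightarrow> b < \<bar>u t\<bar>"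
    unfolding eventually_at_right_field by auto
  have bound: "ennreal (b powr p / \<gamma>) \<le> ennreal (lam powr p) * emeasure (wgamma \<gamma>) (level_slice p \<gamma> u lam)"
    if lam: "lam > 0" "lam \<ge> b / d powr (\<gamma> / p)" for lam
  proof -
    have "b / lam \<le> d powr (\<gamma> / p)"
      using lam \<open>d > 0\<close> by (simp add: field_simps)
    then have "(b / lam) powr (p / \<gamma>) \<le> (d powr (\<gamma> / p)) powr (p / \<gamma>)"
      using assms lam by (intro powr_mono2) auto
    then have "(b / lam) powr (p / \<gamma>) \<le> d"
      using assms \<open>d > 0\<close> by (simp add: powr_powr)
    then have "{0<..<(b / lam) powr (p / \<gamma>)} \<subseteq> level_slice p \<gamma> u lam"
      using assms lam d by (intro Ioo_subset_level_slice) auto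
    then have "ennreal (lam powr p) * emeasure (wgamma \<gamma>) {0<..<(b / lam) powr (p / \<gamma>)}
        \<le> ennreal (lam powr p) * emeasure (wgamma \<gamma>) (level_slice p \<gamma> u lam)"
      using u by (intro mult_left_mono emeasure_mono level_slice_in_sets) auto
    then show ?thesis
      using assms lam by (simp add: scaled_emeasure_wgamma_Ioo)
  qed
  show ?thesis
    using eventually_gt_at_top[of 0] eventually_ge_at_top[of "b / d powr (\<gamma> / p)"]
    by eventually_elim (rule bound)
qed

lemma Liminf_level_slice_ge:
  assumes "p > 0" and "\<gamma> > 0" and u: "u \<in> borel_measurable (wgamma \<gamma>)"
    and lim: "(u \<longlongrightarrow> l) (at_right 0)"
  shows "ennreal (1 / \<gamma>) * ennreal (\<bar>l\<bar> powr p)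
    \<le> Liminf at_top (\<lambda>lam. ennreal (lam powr p) * emeasure (wgamma \<gamma>) (level_slice p \<gamma> u lam))"
    (is "_ \<le> ?L")
proof -
  have "ennreal (\<bar>l\<bar> powr p / \<gamma>) \<le> ?L"
  proof (cases "l = 0")
    case False
    then have "\<bar>l\<bar> > 0"
      by simp
    show ?thesis
    proof (rule tendsto_upperbound)
      show "((\<lambda>b. ennreal (b powr p / \<gamma>)) \<longlongrightarrow> ennreal (\<bar>l\<bar> powr p / \<gamma>)) (at_left \<bar>l\<bar>)"
        using False \<open>\<gamma> > 0\<close> by (intro tendsto_intros) auto
      show "\<forall>\<^sub>F b in at_left \<bar>l\<bar>. ennreal (b powr p / \<gamma>) \<le> ?L"
        using eventually_at_left_real[OF \<open>\<bar>l\<bar> > 0\<close>]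
        by eventually_elim (auto intro!: Liminf_bounded level_slice_eventually_ge assms)
    qed simp
  qed simp
  then show ?thesis
    using \<open>\<gamma> > 0\<close> by (subst ennreal_mult'[symmetric]) simp_all
qed

lemma
  assumes "\<gamma> > 0" and meas: "(\<lambda>(x, t). T t f x) \<in> borel_measurable (M \<Otimes>\<^sub>M wgamma \<gamma>)"
  shows level_meas_eq_nn_integral:
      "level_meas M p \<gamma> T f lam = (\<integral>\<^sup>+ x. emeasure (wgamma \<gamma>) (level_slice p \<gamma> (\<lambda>t. T t f x) lam) \<partial>M)"
    and borel_measurable_emeasure_level_slice:
      "(\<lambda>x. emeasure (wgamma \<gamma>) (level_slice p \<gamma> (\<lambda>t. T t f x) lam)) \<in> borel_measurable M"
proof -
  interpret wgamma: sigma_finite_measure "wgamma \<gamma>"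
    using sigma_finite_measure_wgamma \<open>\<gamma> > 0\<close> .
  let ?E = "{(x, t) \<in> space M \<times> {0<..}. \<bar>T t f x\<bar> / t powr (\<gamma> / p) > lam}"
  have [measurable]: "(\<lambda>w. T (snd w) f (fst w)) \<in> borel_measurable (M \<Otimes>\<^sub>M wgamma \<gamma>)"
    using meas by (simp add: case_prod_beta')
  have [measurable]: "snd \<in> borel_measurable (M \<Otimes>\<^sub>M wgamma \<gamma>)"
    by (rule measurable_compose[OF measurable_snd borel_measurable_wgamma_ident])
  have "?E = {w \<in> space (M \<Otimes>\<^sub>M wgamma \<gamma>). lam < \<bar>T (snd w) f (fst w)\<bar> / snd w powr (\<gamma> / p)}"
    by (auto simp: space_pair_measure)
  also have "\<dots> \<in> sets (M \<Otimes>\<^sub>M wgamma \<gamma>)"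
    by measurable
  finally have E: "?E \<in> sets (M \<Otimes>\<^sub>M wgamma \<gamma>)" .
  show "level_meas M p \<gamma> T f lam = (\<integral>\<^sup>+ x. emeasure (wgamma \<gamma>) (level_slice p \<gamma> (\<lambda>t. T t f x) lam) \<partial>M)"
    unfolding level_meas_def wgamma.emeasure_pair_measure_alt[OF E]
    by (intro nn_integral_cong) (simp add: level_slice_def)
  show "(\<lambda>x. emeasure (wgamma \<gamma>) (level_slice p \<gamma> (\<lambda>t. T t f x) lam)) \<in> borel_measurable M"
    using wgamma.measurable_emeasure_Pair[OF E] by (rule measurable_cong[THEN iffD1, rotated]) (simp add: level_slice_def)
qed

lemma nn_integral_Liminf_at_top:
  fixes F :: "real \<Rightarrow> 'a \<Rightarrow> ennreal"
  assumes meas: "\<And>lam. F lam \<in> borel_measurable M"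
  shows "(\<integral>\<^sup>+ x. Liminf at_top (\<lambda>lam. F lam x) \<partial>M) \<le> Liminf at_top (\<lambda>lam. integral\<^sup>N M (F lam))"
  unfolding le_Liminf_iff
proof (intro allI impI)
  fix y assume y: "y < (\<integral>\<^sup>+ x. Liminf at_top (\<lambda>lam. F lam x) \<partial>M)"
  show "\<forall>\<^sub>F lam in at_top. y < integral\<^sup>N M (F lam)"
  proof (rule ccontr)
    assume "\<not> (\<forall>\<^sub>F lam in at_top. y < integral\<^sup>N M (F lam))"
    then have "\<forall>n::nat. \<exists>lam. lam \<ge> real n \<and> integral\<^sup>N M (F lam) \<le> y"
      by (auto simp: eventually_at_top_linorder not_less)
    then obtain lams where lams: "\<And>n. lams n \<ge> real n" "\<And>n. integral\<^sup>N M (F (lams n)) \<le> y"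
      by metis
    have "filterlim lams at_top sequentially"
      using lams(1) by (intro filterlim_at_top_mono[OF filterlim_real_sequentially]) auto
    then have "Liminf at_top (\<lambda>lam. F lam x) \<le> liminf (\<lambda>n. F (lams n) x)" for x
      unfolding le_Liminf_iff by (auto simp: filterlim_iff dest: less_LiminfD)
    then have "(\<integral>\<^sup>+ x. Liminf at_top (\<lambda>lam. F lam x) \<partial>M) \<le> (\<integral>\<^sup>+ x. liminf (\<lambda>n. F (lams n) x) \<partial>M)"
      by (intro nn_integral_mono)
    also have "\<dots> \<le> liminf (\<lambda>n. integral\<^sup>N M (F (lams n)))"
      using meas by (rule nn_integral_liminf)
    also have "\<dots> \<le> y"
      using lams(2) by (intro Liminf_le) auto
    finally show False
      using y by simp
  qed
qed

lemma borel_measurable_enn_powr [measurable]: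
  assumes [measurable]: "h \<in> borel_measurable M"
  shows "(\<lambda>x. enn_powr (h x) p) \<in> borel_measurable M"
  unfolding enn_powr_def by measurable

lemma level_meas_weak_type:
  assumes "p > 0" and "\<gamma> > 0"
    and meas: "(\<lambda>(x, t). T t f x) \<in> borel_measurable (M \<Otimes>\<^sub>M wgamma \<gamma>)"
    and [measurable]: "Tstar T f \<in> borel_measurable M"
  shows "(SUP lam\<in>{0<..}. ennreal (lam powr p) * level_meas M p \<gamma> T f lam)
    \<le> ennreal (1 / \<gamma>) * (\<integral>\<^sup>+ x. enn_powr (Tstar T f x) p \<partial>M)"
proof (rule SUP_least)
  fix lam :: real assume "lam \<in> {0<..}"
  have "ennreal (lam powr p) * level_meas M p \<gamma> T f lam
      = (\<integral>\<^sup>+ x. ennreal (lam powr p) * emeasure (wgamma \<gamma>) (level_slice p \<gamma> (\<lambda>t. T t f x) lam) \<partial>M)"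
    by (simp add: level_meas_eq_nn_integral[where T=T and f=f, OF assms(2) meas]
        nn_integral_cmult[OF borel_measurable_emeasure_level_slice[where T=T and f=f, OF assms(2) meas]])
  also have "\<dots> \<le> (\<integral>\<^sup>+ x. ennreal (1 / \<gamma>) * enn_powr (Tstar T f x) p \<partial>M)"
    unfolding Tstar_def using assms \<open>lam \<in> {0<..}\<close> by (intro nn_integral_mono level_slice_weak_type) auto
  also have "\<dots> = ennreal (1 / \<gamma>) * (\<integral>\<^sup>+ x. enn_powr (Tstar T f x) p \<partial>M)"
    by (rule nn_integral_cmult) measurable
  finally show "ennreal (lam powr p) * level_meas M p \<gamma> T f lam
      \<le> ennreal (1 / \<gamma>) * (\<integral>\<^sup>+ x. enn_powr (Tstar T f x) p \<partial>M)" .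
qed

lemma AE_tendsto_at_right_borel_measurable_limit:
  fixes u :: "real \<Rightarrow> 'a \<Rightarrow> real"
  assumes "\<And>t. t > 0 \<Longrightarrow> u t \<in> borel_measurable M"
    and conv: "AE x in M. \<exists>l. ((\<lambda>t. u t x) \<longlongrightarrow> l) (at_right 0)"
  obtains G where "G \<in> borel_measurable M" and "AE x in M. ((\<lambda>t. u t x) \<longlongrightarrow> G x) (at_right 0)"
proof
  \<comment> \<open>The limit along \<open>t = 1/(n+1)\<close> is measurable and agrees with the limit at \<open>0+\<close> where the latter exists.\<close>
  have at_right: "filterlim (\<lambda>n. 1 / real (Suc n)) (at_right (0::real)) sequentially"
    using LIMSEQ_Suc[OF lim_inverse_n']
    by (auto simp: filterlim_at intro!: always_eventually)
  show "(\<lambda>x. lim (\<lambda>n. u (1 / real (Suc n)) x)) \<in> borel_measurable M"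
    using assms(1) by (intro borel_measurable_lim_metric) auto
  show "AE x in M. ((\<lambda>t. u t x) \<longlongrightarrow> lim (\<lambda>n. u (1 / real (Suc n)) x)) (at_right 0)"
    using conv
  proof eventually_elim
    case (elim x)
    then obtain l where l: "((\<lambda>t. u t x) \<longlongrightarrow> l) (at_right 0)"
      by blast
    then have "lim (\<lambda>n. u (1 / real (Suc n)) x) = l"
      using filterlim_compose[OF l at_right] by (intro limI) simp
    with l show ?case
      by simp
  qed
qed

lemma level_meas_Liminf_ge:
  assumes "p > 0" and "\<gamma> > 0"
    and meas: "(\<lambda>(x, t). T t f x) \<in> borel_measurable (M \<Otimes>\<^sub>M wgamma \<gamma>)"
    and conv: "AE x in M. \<exists>l. ((\<lambda>t. T t f x) \<longlongrightarrow> l) (at_right 0)"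
  shows "ennreal (1 / \<gamma>) * Lp_norm_pow M p (\<lambda>x. Lim (at_right 0) (\<lambda>t. T t f x))
    \<le> Liminf at_top (\<lambda>lam. ennreal (lam powr p) * level_meas M p \<gamma> T f lam)"
proof -
  have Tt: "(\<lambda>x. T t f x) \<in> borel_measurable M" if "t > 0" for t
    using measurable_Pair1[OF meas, of t] that by simp
  have Tx: "(\<lambda>t. T t f x) \<in> borel_measurable (wgamma \<gamma>)" if "x \<in> space M" for x
    using measurable_Pair2[OF meas that] by simp
  obtain G where [measurable]: "G \<in> borel_measurable M"
    and G: "AE x in M. ((\<lambda>t. T t f x) \<longlongrightarrow> G x) (at_right 0)"
    using AE_tendsto_at_right_borel_measurable_limit[OF Tt conv] by blast
  have "ennreal (1 / \<gamma>) * Lp_norm_pow M p (\<lambda>x. Lim (at_right 0) (\<lambda>t. T t f x))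
      = ennreal (1 / \<gamma>) * (\<integral>\<^sup>+ x. ennreal (\<bar>G x\<bar> powr p) \<partial>M)"
  proof -
    have "AE x in M. Lim (at_right 0) (\<lambda>t. T t f x) = G x"
      using G by eventually_elim (simp add: tendsto_Lim)
    then show ?thesis
      unfolding Lp_norm_pow_def by (intro arg_cong2[where f="(*)"] refl nn_integral_cong_AE) auto
  qed
  also have "\<dots> = (\<integral>\<^sup>+ x. ennreal (1 / \<gamma>) * ennreal (\<bar>G x\<bar> powr p) \<partial>M)"
    by (rule nn_integral_cmult[symmetric]) measurable
  also have "\<dots> \<le> (\<integral>\<^sup>+ x. Liminf at_top (\<lambda>lam.
      ennreal (lam powr p) * emeasure (wgamma \<gamma>) (level_slice p \<gamma> (\<lambda>t. T t f x) lam)) \<partial>M)"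
  proof (rule nn_integral_mono_AE)
    show "AE x in M. ennreal (1 / \<gamma>) * ennreal (\<bar>G x\<bar> powr p) \<le> Liminf at_top (\<lambda>lam.
        ennreal (lam powr p) * emeasure (wgamma \<gamma>) (level_slice p \<gamma> (\<lambda>t. T t f x) lam))"
      using G AE_space by eventually_elim (rule Liminf_level_slice_ge[OF assms(1,2) Tx])
  qed
  also have "\<dots> \<le> Liminf at_top (\<lambda>lam. (\<integral>\<^sup>+ x.
      ennreal (lam powr p) * emeasure (wgamma \<gamma>) (level_slice p \<gamma> (\<lambda>t. T t f x) lam) \<partial>M))"
    by (intro nn_integral_Liminf_at_top borel_measurable_times_ennreal borel_measurable_const
        borel_measurable_emeasure_level_slice[where T=T and f=f, OF assms(2) meas])
  also have "\<dots> = Liminf at_top (\<lambda>lam. ennreal (lam powr p) * level_meas M p \<gamma> T f lam)"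
    by (simp add: level_meas_eq_nn_integral[where T=T and f=f, OF assms(2) meas]
        nn_integral_cmult[OF borel_measurable_emeasure_level_slice[where T=T and f=f, OF assms(2) meas]])
  finally show ?thesis .
qed

text \<open>
  Neither \<open>\<sigma>\<close>-finiteness of \<open>M\<close>, nor the mapping property of \<open>T\<close> on \<open>L\<^sup>p\<close>, nor finiteness of
  \<open>\<parallel>T\<^sup>*f\<parallel>\<^sub>p\<close> is used: Tonelli only needs the inner measure \<open>w\<^sub>\<gamma>\<close> to be \<open>\<sigma>\<close>-finite, and the joint
  measurability of \<open>T\<^sub>t f(x)\<close> already makes every \<open>T\<^sub>t f\<close> measurable.
\<close>

theorem theorem1p1:
  fixes M :: "'a measure" and p \<gamma> :: real
    and T :: "real \<Rightarrow> ('a \<Rightarrow> real) \<Rightarrow> ('a \<Rightarrow> real)" and f :: "'a \<Rightarrow> real"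
  assumes "sigma_finite_measure M"
    and "1 \<le> p"
    and "\<gamma> > 0"
    and "\<And>g t. Lp_mem M p g \<Longrightarrow> t > 0 \<Longrightarrow> Lp_mem M p (T t g)"
    and "Lp_mem M p f"
    and "(\<lambda>(x, t). T t f x) \<in> borel_measurable (M \<Otimes>\<^sub>M wgamma \<gamma>)"
  shows "(Tstar T f \<in> borel_measurable M \<and> (\<integral>\<^sup>+ x. enn_powr (Tstar T f x) p \<partial>M) < \<infinity>
          \<longrightarrow> (SUP lam\<in>{0<..}. ennreal (lam powr p) * level_meas M p \<gamma> T f lam)
                \<le> ennreal (1 / \<gamma>) * (\<integral>\<^sup>+ x. enn_powr (Tstar T f x) p \<partial>M))
      \<and> (\<forall>C. p > 1 \<and> C > 0 \<and>
            (\<forall>g. Lp_mem M p g \<longrightarrow> Tstar T g \<in> borel_measurable M \<and>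
                 (\<integral>\<^sup>+ x. enn_powr (Tstar T g x) p \<partial>M) \<le> ennreal (C powr p) * Lp_norm_pow M p g)
          \<longrightarrow> (SUP lam\<in>{0<..}. ennreal (lam powr p) * level_meas M p \<gamma> T f lam)
                \<le> ennreal (C powr p / \<gamma>) * Lp_norm_pow M p f)
      \<and> ((AE x in M. \<exists>l. ((\<lambda>t. T t f x) \<longlongrightarrow> l) (at_right 0))
          \<longrightarrow> ennreal (1 / \<gamma>) * Lp_norm_pow M p (\<lambda>x. Lim (at_right 0) (\<lambda>t. T t f x))
                \<le> Liminf at_top (\<lambda>lam. ennreal (lam powr p) * level_meas M p \<gamma> T f lam))"
proof (intro conjI allI impI)
  have "p > 0"
    using assms(2) by simp
  note weak_type = level_meas_weak_type[where T=T and f=f, OF \<open>p > 0\<close> assms(3,6)]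
  show "(SUP lam\<in>{0<..}. ennreal (lam powr p) * level_meas M p \<gamma> T f lam)
      \<le> ennreal (1 / \<gamma>) * (\<integral>\<^sup>+ x. enn_powr (Tstar T f x) p \<partial>M)"
    if "Tstar T f \<in> borel_measurable M \<and> (\<integral>\<^sup>+ x. enn_powr (Tstar T f x) p \<partial>M) < \<infinity>"
    using weak_type that by blast
  show "(SUP lam\<in>{0<..}. ennreal (lam powr p) * level_meas M p \<gamma> T f lam)
      \<le> ennreal (C powr p / \<gamma>) * Lp_norm_pow M p f"
    if maximal: "p > 1 \<and> C > 0 \<and>
      (\<forall>g. Lp_mem M p g \<longrightarrow> Tstar T g \<in> borel_measurable M \<and>
        (\<integral>\<^sup>+ x. enn_powr (Tstar T g x) p \<partial>M) \<le> ennreal (C powr p) * Lp_norm_pow M p g)" for C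
  proof -
    have Tstar_measurable: "Tstar T f \<in> borel_measurable M"
      and bound: "(\<integral>\<^sup>+ x. enn_powr (Tstar T f x) p \<partial>M) \<le> ennreal (C powr p) * Lp_norm_pow M p f"
      using maximal assms(5) by auto
    have "(SUP lam\<in>{0<..}. ennreal (lam powr p) * level_meas M p \<gamma> T f lam)
        \<le> ennreal (1 / \<gamma>) * (\<integral>\<^sup>+ x. enn_powr (Tstar T f x) p \<partial>M)"
      using weak_type Tstar_measurable .
    also have "\<dots> \<le> ennreal (1 / \<gamma>) * (ennreal (C powr p) * Lp_norm_pow M p f)"
      using bound by (rule mult_left_mono) simp
    also have "\<dots> = ennreal (C powr p / \<gamma>) * Lp_norm_pow M p f"
      using assms(3) by (simp add: mult.assoc[symmetric] ennreal_mult[symmetric] del: ennreal_mult)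
    finally show ?thesis .
  qed
  show "ennreal (1 / \<gamma>) * Lp_norm_pow M p (\<lambda>x. Lim (at_right 0) (\<lambda>t. T t f x))
      \<le> Liminf at_top (\<lambda>lam. ennreal (lam powr p) * level_meas M p \<gamma> T f lam)"
    if "AE x in M. \<exists>l. ((\<lambda>t. T t f x) \<longlongrightarrow> l) (at_right 0)"
    using level_meas_Liminf_ge[where T=T and f=f, OF \<open>p > 0\<close> assms(3,6) that] .
qed

end
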